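(* Let $X$ be a real Hilbert space, let $L\colon X\to X$ be linear and nonexpansive, let $b\in X$, and let $T\colon X\to X\colon x\mapsto Lx+b$. Let $v:=P_{\overline{\operatorname{ran}}(\mathrm{Id}-T)}0$ and suppose $v\in\operatorname{ran}(\mathrm{Id}-T)$. Let $x\in X$. Then: (i) $v=P_{\operatorname{Fix}L}(-b)\in\operatorname{Fix}L=(\operatorname{ran}(\mathrm{Id}-L))^\perp$, and $v\neq0\iff b\notin\operatorname{ran}(\mathrm{Id}-L)$; (ii) for all $n\in\mathbb N$, $T^nx=L^nx+\sum_{k=0}^{n-1}L^kb$; (iii) for all $n\in\mathbb N$, $T^nx+nv=L^nx+\sum_{k=0}^{n-1}L^kP_{\overline{\operatorname{ran}}(\mathrm{Id}-L)}b$; (iv) for all $n\in\mathbb N$, $(T_{-v})^nx=T^nx+nv$; (v) for all $n\in\mathbb N$, $(T_{-v})^nx=(v+T)^nx$; (vi) $\operatorname{Fix}(T_{-v})=-v+\operatorname{Fix}(T_{-v})=-v+\operatorname{Fix}(v+T)=\operatorname{Fix}(v+T)$; (vii) $\operatorname{Fix}(T_{-v})=\operatorname{Fix}(v+T)=\mathbb Rv+\operatorname{Fix}(v+T)=\mathbb Rv+\operatorname{Fix}(T_{-v})$; consequently $v$ lies in the lineality space of the affine subspace $\operatorname{Fix}(T_{-v})=\operatorname{Fix}(v+T)$.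
   Context: $\overline{\operatorname{ran}}(\mathrm{Id}-T)$ is the closure of the range of $\mathrm{Id}-T$ (a closed convex set, so $v$ is well-defined). $T_{-v}x:=T(x+v)$ and $(v+T)x:=v+Tx$. $\operatorname{Fix}$ denotes the fixed point set, $P_C$ the projection onto a closed convex set $C$. The lineality space of a convex set $C$ is the set of $d$ with $C+\mathbb Rd=C$. *)

theory Defs
  imports "HOL-Analysis.Analysis"
begin

text \<open>Metric projection onto a set C (meant for nonempty closed convex C in a real
Hilbert space, where the nearest point exists and is unique).  The library's
closest_point needs heine_borel, i.e. finite dimension, so we define it here.\<close>
definition proj :: "'a::real_inner set \<Rightarrow> 'a \<Rightarrow> 'a" where
  "proj C a = (THE p. p \<in> C \<and> (\<forall>y\<in>C. dist a p \<le> dist a y))"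

definition Fix :: "('a \<Rightarrow> 'a) \<Rightarrow> 'a set" where
  "Fix f = {x. f x = x}"

definition lineality_space :: "'a::real_vector set \<Rightarrow> 'a set" where
  "lineality_space C = {d. {c + t *\<^sub>R d | c t. c \<in> C} = C}"

end

theory Submission
  imports Defs
begin

text \<open>
  The range of \<open>Id - T\<close> is the translate \<open>ran (Id - L) - b\<close>, so its minimal-norm point
  is \<open>v = P\<^sub>S b - b\<close> with \<open>S\<close> the closure of \<open>ran (Id - L)\<close>; in particular \<open>-v \<perpendicular> S\<close>.
  For a nonexpansive linear \<open>L\<close>, expanding \<open>\<parallel>y + t L z\<parallel> \<le> \<parallel>y + t z\<parallel>\<close> for a fixed point \<open>y\<close>
  shows \<open>y \<perpendicular> z - L z\<close>, and conversely \<open>\<parallel>y - L y\<parallel>\<^sup>2 \<le> 2 \<langle>y, y - L y\<rangle>\<close>; hence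
  \<open>Fix L = ran (Id - L)\<^sup>\<bottom> = S\<^sup>\<bottom>\<close> contains \<open>v\<close>. Everything else follows because \<open>T\<close>
  commutes with translations along the fixed vector \<open>v\<close>: \<open>T (y + t v) = T y + t v\<close>.
\<close>

lemma quadratic_nonneg_imp_linear_coeff_eq_0:
  fixes a c :: real
  assumes "\<And>t. 0 \<le> 2 * t * a + t\<^sup>2 * c"
  shows "a = 0"
proof -
  define k where "k = \<bar>c\<bar> + 1"
  define t where "t = - a / k"
  have k: "k > 0" unfolding k_def by simp
  have "0 \<le> 2 * t * a + t\<^sup>2 * c" by (rule assms)
  also have "\<dots> \<le> 2 * t * a + t\<^sup>2 * k"
    unfolding k_def by (intro add_left_mono mult_left_mono) auto
  also have "\<dots> = - a\<^sup>2 / k"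
    using k unfolding t_def by (simp add: field_simps power2_eq_square)
  finally have "a\<^sup>2 \<le> 0"
    using k by (simp add: divide_le_0_iff)
  then show ?thesis by simp
qed

lemma inner_eq_0_if_norm_le_norm_add_scaleR:
  fixes u w :: "'a::real_inner"
  assumes "\<And>t. norm u \<le> norm (u + t *\<^sub>R w)"
  shows "inner u w = 0"
proof (rule quadratic_nonneg_imp_linear_coeff_eq_0)
  fix t :: real
  have "(norm u)\<^sup>2 \<le> (norm (u + t *\<^sub>R w))\<^sup>2"
    using assms[of t] by (simp add: power_mono)
  also have "\<dots> = (norm u)\<^sup>2 + 2 * t * inner u w + t\<^sup>2 * (norm w)\<^sup>2"
    by (simp only: power2_norm_eq_inner)
      (simp add: inner_simps inner_commute power2_eq_square algebra_simps)
  finally show "0 \<le> 2 * t * inner u w + t\<^sup>2 * (norm w)\<^sup>2" by simp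
qed

lemma parallelogram_law:
  fixes x y :: "'a::real_inner"
  shows "(norm (x + y))\<^sup>2 + (norm (x - y))\<^sup>2 = 2 * (norm x)\<^sup>2 + 2 * (norm y)\<^sup>2"
  by (simp add: power2_norm_eq_inner inner_simps inner_commute)

lemma dist_midpoint_parallelogram:
  fixes a x y :: "'a::real_inner"
  shows "(dist x y)\<^sup>2 = 2 * (dist a x)\<^sup>2 + 2 * (dist a y)\<^sup>2 - 4 * (dist a (midpoint x y))\<^sup>2"
proof -
  have "2 *\<^sub>R (a - midpoint x y) = (a - x) + (a - y)"
    by (simp add: midpoint_def scaleR_right_diff_distrib scaleR_2)
  from arg_cong[OF this, of norm]
  have "norm ((a - x) + (a - y)) = 2 * dist a (midpoint x y)"
    by (simp add: dist_norm)
  then have "(norm ((a - x) + (a - y)))\<^sup>2 = 4 * (dist a (midpoint x y))\<^sup>2"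
    by (simp add: power_mult_distrib)
  moreover have "dist x y = norm ((a - x) - (a - y))"
    by (simp add: dist_norm norm_minus_commute)
  ultimately show ?thesis
    using parallelogram_law[of "a - x" "a - y"] by (simp add: dist_norm)
qed

lemma minimizing_sequence_Cauchy:
  fixes C :: "'a::real_inner set"
  assumes "convex C" and D_le: "\<And>y. y \<in> C \<Longrightarrow> D \<le> (dist a y)\<^sup>2"
    and f_in: "\<And>n. f n \<in> C" and f_less: "\<And>n. (dist a (f n))\<^sup>2 < D + 1 / (real n + 1)"
  shows "Cauchy f"
proof (rule metric_CauchyI)
  have f_close: "(dist (f m) (f n))\<^sup>2 \<le> 2 / (real m + 1) + 2 / (real n + 1)" for m n
  proof -
    have "midpoint (f m) (f n) \<in> C"
      using closed_segment_subset[OF f_in f_in assms(1)] midpoint_in_closed_segment by blast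
    then have "D \<le> (dist a (midpoint (f m) (f n)))\<^sup>2" by (rule D_le)
    then show ?thesis
      using dist_midpoint_parallelogram[of "f m" "f n" a] f_less[of m] f_less[of n] by linarith
  qed
  fix e :: real assume "e > 0"
  then obtain N :: nat where N: "4 / e\<^sup>2 < real N"
    using reals_Archimedean2 by blast
  have "4 < real N * e\<^sup>2"
    using N \<open>e > 0\<close> by (simp add: field_simps)
  moreover have "0 < e\<^sup>2"
    using \<open>e > 0\<close> by simp
  ultimately have "4 < (real N + 1) * e\<^sup>2"
    unfolding distrib_right by linarith
  then have "4 / (real N + 1) < e\<^sup>2"
    by (simp add: pos_divide_less_eq mult.commute)
  then have N_bound: "2 / (real N + 1) + 2 / (real N + 1) < e\<^sup>2"
    by (simp add: add_divide_distrib[symmetric])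
  have "dist (f m) (f n) < e" if "m \<ge> N" "n \<ge> N" for m n
  proof -
    have "2 / (real m + 1) \<le> 2 / (real N + 1)" "2 / (real n + 1) \<le> 2 / (real N + 1)"
      using that by (auto intro!: divide_left_mono)
    then have "(dist (f m) (f n))\<^sup>2 < e\<^sup>2"
      using f_close[of m n] N_bound by linarith
    then show ?thesis
      using \<open>e > 0\<close> by (simp add: power_less_imp_less_base)
  qed
  then show "\<exists>M. \<forall>m\<ge>M. \<forall>n\<ge>M. dist (f m) (f n) < e" by blast
qed

lemma nearest_point_exists:
  fixes C :: "'a::{real_inner,complete_space} set"
  assumes "convex C" and "closed C" and "C \<noteq> {}"
  shows "\<exists>p\<in>C. \<forall>y\<in>C. dist a p \<le> dist a y"
proof -
  define D where "D = Inf ((\<lambda>y. (dist a y)\<^sup>2) ` C)"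
  have D_le: "D \<le> (dist a y)\<^sup>2" if "y \<in> C" for y
    unfolding D_def using that by (intro cInf_lower bdd_belowI[of _ 0]) auto
  have "\<exists>y\<in>C. (dist a y)\<^sup>2 < D + 1 / (real n + 1)" for n
  proof -
    have "\<exists>d\<in>(\<lambda>y. (dist a y)\<^sup>2) ` C. d < D + 1 / (real n + 1)"
      unfolding D_def using assms(3) by (intro cInf_lessD) auto
    then show ?thesis by blast
  qed
  then obtain f where f_in: "\<And>n. f n \<in> C"
    and f_less: "\<And>n. (dist a (f n))\<^sup>2 < D + 1 / (real n + 1)"
    by metis
  then have "Cauchy f"
    using minimizing_sequence_Cauchy[OF assms(1) D_le] by blast
  then obtain p where lim: "f \<longlonglongrightarrow> p"
    using Cauchy_convergent convergent_def by blast
  have p_in: "p \<in> C"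
    using assms(2) f_in lim closed_sequentially by blast
  have "(\<lambda>n. (dist a (f n))\<^sup>2) \<longlonglongrightarrow> (dist a p)\<^sup>2"
    by (intro tendsto_intros lim)
  moreover have "(\<lambda>n. D + 1 / (real n + 1)) \<longlonglongrightarrow> D"
    using LIMSEQ_inverse_real_of_nat_add[of D] by (simp add: inverse_eq_divide add.commute)
  ultimately have "(dist a p)\<^sup>2 \<le> D"
    using f_less by (intro LIMSEQ_le) (auto intro: less_imp_le)
  then have "dist a p \<le> dist a y" if "y \<in> C" for y
    using D_le[OF that] by (simp add: power2_le_imp_le)
  then show ?thesis using p_in by blast
qed

lemma proj_eqI:
  fixes C :: "'a::real_inner set"
  assumes "convex C" and "closed C" and "p \<in> C" and "\<And>y. y \<in> C \<Longrightarrow> dist a p \<le> dist a y"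
  shows "proj C a = p"
  unfolding proj_def
proof (rule the_equality)
  show "p \<in> C \<and> (\<forall>y\<in>C. dist a p \<le> dist a y)" using assms by blast
  show "q = p" if "q \<in> C \<and> (\<forall>y\<in>C. dist a q \<le> dist a y)" for q
    using any_closest_point_unique[OF assms(1,2)] that assms(3,4) by blast
qed

lemma
  fixes C :: "'a::{real_inner,complete_space} set"
  assumes "convex C" and "closed C" and "C \<noteq> {}"
  shows proj_in: "proj C a \<in> C"
    and proj_nearest: "y \<in> C \<Longrightarrow> dist a (proj C a) \<le> dist a y"
proof -
  obtain p where "p \<in> C" "\<And>y. y \<in> C \<Longrightarrow> dist a p \<le> dist a y"
    using nearest_point_exists[OF assms] by blast
  moreover from this have "proj C a = p" using proj_eqI assms by blast
  ultimately show "proj C a \<in> C" "y \<in> C \<Longrightarrow> dist a (proj C a) \<le> dist a y" by auto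
qed

lemma proj_translation_subtract:
  fixes C :: "'a::{real_inner,complete_space} set"
  assumes "convex C" and "closed C" and "C \<noteq> {}"
  shows "proj ((\<lambda>y. y - b) ` C) a = proj C (a + b) - b"
proof (rule proj_eqI)
  show "convex ((\<lambda>y. y - b) ` C)" using assms(1) by (rule convex_translation_subtract)
  show "closed ((\<lambda>y. y - b) ` C)" using assms(2) by (rule closed_translation_subtract)
  show "proj C (a + b) - b \<in> (\<lambda>y. y - b) ` C" using proj_in[OF assms] by blast
  show "dist a (proj C (a + b) - b) \<le> dist a z" if "z \<in> (\<lambda>y. y - b) ` C" for z
    using that proj_nearest[OF assms, of _ "a + b"] by (auto simp: dist_norm algebra_simps)
qed

lemma subspace_closure:
  fixes S :: "'a::real_normed_vector set"
  assumes "subspace S"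
  shows "subspace (closure S)"
  unfolding subspace_def
proof (intro conjI ballI allI)
  show "0 \<in> closure S" using assms closure_subset subspace_0 by blast
next
  fix x y assume "x \<in> closure S" "y \<in> closure S"
  then obtain f g where "\<And>n. f n \<in> S" "f \<longlonglongrightarrow> x" "\<And>n. g n \<in> S" "g \<longlonglongrightarrow> y"
    unfolding closure_sequential by metis
  then show "x + y \<in> closure S"
    unfolding closure_sequential
    by (intro exI[of _ "\<lambda>n. f n + g n"]) (auto intro: subspace_add[OF assms] tendsto_add)
next
  fix c :: real and x assume "x \<in> closure S"
  then obtain f where "\<And>n. f n \<in> S" "f \<longlonglongrightarrow> x"
    unfolding closure_sequential by metis
  then show "c *\<^sub>R x \<in> closure S"
    unfolding closure_sequential
    by (intro exI[of _ "\<lambda>n. c *\<^sub>R f n"]) (auto intro: subspace_scale[OF assms] tendsto_scaleR)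
qed

lemma closed_orthogonal_comp: "closed (orthogonal_comp W)"
proof -
  have "orthogonal_comp W = (\<Inter>w\<in>W. {x. inner w x = 0})"
    by (auto simp: orthogonal_comp_def orthogonal_def)
  then show ?thesis by (auto intro: closed_INT closed_hyperplane)
qed

lemma orthogonal_comp_closure: "orthogonal_comp (closure W) = orthogonal_comp W"
proof
  show "orthogonal_comp (closure W) \<subseteq> orthogonal_comp W"
    by (intro orthogonal_comp_anti_mono closure_subset)
  show "orthogonal_comp W \<subseteq> orthogonal_comp (closure W)"
  proof
    fix x assume "x \<in> orthogonal_comp W"
    then have "W \<subseteq> {w. inner w x = 0}" by (auto simp: orthogonal_comp_def orthogonal_def)
    then have "closure W \<subseteq> {w. inner w x = 0}"
      using closed_hyperplane[of x 0] by (intro closure_minimal) (auto simp: inner_commute)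
    then show "x \<in> orthogonal_comp (closure W)" by (auto simp: orthogonal_comp_def orthogonal_def)
  qed
qed

lemma proj_subspace_eqI:
  fixes S :: "'a::real_inner set"
  assumes "subspace S" and "closed S" and "p \<in> S" and "a - p \<in> orthogonal_comp S"
  shows "proj S a = p"
proof (rule proj_eqI[OF subspace_imp_convex[OF assms(1)] assms(2,3)])
  fix y assume "y \<in> S"
  then have "p - y \<in> S" using assms(1,3) by (simp add: subspace_diff)
  then have "orthogonal (a - p) (p - y)"
    using assms(4) orthogonal_commute unfolding orthogonal_comp_def by blast
  then have "(dist a y)\<^sup>2 = (dist a p)\<^sup>2 + (norm (p - y))\<^sup>2"
    using norm_add_Pythagorean[of "a - p" "p - y"] by (simp add: dist_norm)
  then show "dist a p \<le> dist a y"
    by (simp add: power2_le_imp_le)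
qed

lemma proj_subspace_orthogonal:
  fixes S :: "'a::{real_inner,complete_space} set"
  assumes "subspace S" and "closed S"
  shows "a - proj S a \<in> orthogonal_comp S"
proof -
  have S: "convex S" "closed S" "S \<noteq> {}"
    using assms subspace_imp_convex subspace_0 by blast+
  have "inner (a - proj S a) w = 0" if "w \<in> S" for w
  proof (rule inner_eq_0_if_norm_le_norm_add_scaleR)
    fix t :: real
    have "proj S a - t *\<^sub>R w \<in> S"
      using assms(1) proj_in[OF S] that by (simp add: subspace_diff subspace_scale)
    then have "dist a (proj S a) \<le> dist a (proj S a - t *\<^sub>R w)"
      by (rule proj_nearest[OF S])
    then show "norm (a - proj S a) \<le> norm (a - proj S a + t *\<^sub>R w)"
      by (simp add: dist_norm algebra_simps)
  qed
  then show ?thesis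
    by (auto simp: orthogonal_comp_def orthogonal_def inner_commute)
qed

lemma subspace_range_diff:
  assumes "linear L"
  shows "subspace (range (\<lambda>y. y - L y))"
  using linear_compose_sub[OF linear_ident assms] subspace_UNIV by (rule linear_subspace_image)

lemma orthogonal_range_diff_if_fixed:
  fixes L :: "'a::real_inner \<Rightarrow> 'a"
  assumes "linear L" and "\<And>y. norm (L y) \<le> norm y" and "L y = y"
  shows "inner y (z - L z) = 0"
proof (rule quadratic_nonneg_imp_linear_coeff_eq_0)
  fix t :: real
  have "norm (y + t *\<^sub>R L z) \<le> norm (y + t *\<^sub>R z)"
    using assms(2)[of "y + t *\<^sub>R z"] by (simp add: linear_add[OF assms(1)] linear_scale[OF assms(1)] assms(3))
  then have "(norm (y + t *\<^sub>R L z))\<^sup>2 \<le> (norm (y + t *\<^sub>R z))\<^sup>2"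
    by (simp add: power_mono)
  moreover have "(norm (y + t *\<^sub>R u))\<^sup>2 = (norm y)\<^sup>2 + 2 * t * inner y u + t\<^sup>2 * (norm u)\<^sup>2" for u
    by (simp only: power2_norm_eq_inner)
      (simp add: inner_simps inner_commute power2_eq_square algebra_simps)
  ultimately show "0 \<le> 2 * t * inner y (z - L z) + t\<^sup>2 * ((norm z)\<^sup>2 - (norm (L z))\<^sup>2)"
    by (simp add: inner_diff_right algebra_simps)
qed

lemma fixed_if_orthogonal_range_diff:
  fixes L :: "'a::real_inner \<Rightarrow> 'a"
  assumes "\<And>y. norm (L y) \<le> norm y" and "inner y (y - L y) = 0"
  shows "L y = y"
proof -
  have "(norm (y - L y))\<^sup>2 = (norm (L y))\<^sup>2 - (norm y)\<^sup>2 + 2 * inner y (y - L y)"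
    by (simp only: power2_norm_eq_inner) (simp add: inner_simps inner_commute)
  also have "\<dots> \<le> 0"
    using power_mono[OF assms(1)[of y], of 2] assms(2) by simp
  finally show ?thesis by simp
qed

lemma Fix_eq_orthogonal_comp_range_diff:
  fixes L :: "'a::real_inner \<Rightarrow> 'a"
  assumes "linear L" and "\<And>y. norm (L y) \<le> norm y"
  shows "Fix L = orthogonal_comp (range (\<lambda>y. y - L y))"
  using orthogonal_range_diff_if_fixed[OF assms] fixed_if_orthogonal_range_diff[OF assms(2)]
  by (fastforce simp: Fix_def orthogonal_comp_def orthogonal_def inner_commute)

lemma linear_funpow:
  fixes L :: "'a::real_vector \<Rightarrow> 'a"
  assumes "linear L"
  shows "linear (L ^^ n)"
proof (induction n)
  case 0
  show ?case unfolding funpow.simps(1) by (rule linear_id)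
next
  case (Suc n)
  show ?case unfolding funpow.simps(2) by (rule linear_compose[OF Suc.IH assms])
qed

lemma funpow_fixed_point:
  assumes "f x = x"
  shows "(f ^^ n) x = x"
  by (induction n) (simp_all add: assms)

lemma sum_funpow_add_fixed:
  fixes L :: "'a::real_vector \<Rightarrow> 'a"
  assumes "linear L" and "L v = v"
  shows "(\<Sum>k<n. (L ^^ k) (b + v)) = (\<Sum>k<n. (L ^^ k) b) + real n *\<^sub>R v"
  by (simp add: linear_add[OF linear_funpow[OF assms(1)]] funpow_fixed_point[of L, OF assms(2)]
      sum.distrib sum_constant_scaleR)

lemma funpow_affine:
  assumes "linear L"
  shows "((\<lambda>y. L y + b) ^^ n) x = (L ^^ n) x + (\<Sum>k<n. (L ^^ k) b)"
proof (induction n)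
  case 0
  show ?case by simp
next
  case (Suc n)
  have "((\<lambda>y. L y + b) ^^ Suc n) x = (L ^^ Suc n) x + ((\<Sum>k<n. (L ^^ Suc k) b) + b)"
    using Suc by (simp add: linear_add[OF assms] linear_sum[OF assms])
  also have "(\<Sum>k<n. (L ^^ Suc k) b) + b = (\<Sum>k<Suc n. (L ^^ k) b)"
    by (subst sum.lessThan_Suc_shift) (simp add: add.commute)
  finally show ?case .
qed

lemma affine_Fix_affine_map:
  assumes "linear L"
  shows "affine (Fix (\<lambda>y. L y + c))"
  unfolding affine_def Fix_def
proof (intro ballI allI impI, simp only: mem_Collect_eq)
  fix y z and u w :: real
  assume fixed: "L y + c = y" "L z + c = z" and "u + w = 1"
  then have "L (u *\<^sub>R y + w *\<^sub>R z) + c = u *\<^sub>R L y + w *\<^sub>R L z + (u + w) *\<^sub>R c"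
    by (simp add: linear_add[OF assms] linear_scale[OF assms])
  also have "\<dots> = u *\<^sub>R (L y + c) + w *\<^sub>R (L z + c)"
    by (simp add: algebra_simps)
  finally show "L (u *\<^sub>R y + w *\<^sub>R z) + c = u *\<^sub>R y + w *\<^sub>R z"
    by (simp only: fixed)
qed

lemma funpow_shifted_arg:
  fixes T :: "'a::real_vector \<Rightarrow> 'a"
  assumes "\<And>y t. T (y + t *\<^sub>R v) = T y + t *\<^sub>R v"
  shows "((\<lambda>y. T (y + v)) ^^ n) x = (T ^^ n) x + real n *\<^sub>R v"
proof (induction n)
  case 0
  show ?case by simp
next
  case (Suc n)
  have "((\<lambda>y. T (y + v)) ^^ Suc n) x = T ((T ^^ n) x + (real n + 1) *\<^sub>R v)"
    using Suc by (simp add: algebra_simps)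
  then show ?case by (simp add: assms)
qed

lemma funpow_shifted_value:
  fixes T :: "'a::real_vector \<Rightarrow> 'a"
  assumes "\<And>y t. T (y + t *\<^sub>R v) = T y + t *\<^sub>R v"
  shows "((\<lambda>y. v + T y) ^^ n) x = (T ^^ n) x + real n *\<^sub>R v"
proof (induction n)
  case 0
  show ?case by simp
next
  case (Suc n)
  have "((\<lambda>y. v + T y) ^^ Suc n) x = v + T ((T ^^ n) x + real n *\<^sub>R v)"
    using Suc by simp
  then show ?case by (simp add: assms algebra_simps)
qed

lemma Fix_shifted_arg_eq_Fix_shifted_value:
  fixes T :: "'a::real_vector \<Rightarrow> 'a"
  assumes "\<And>y t. T (y + t *\<^sub>R v) = T y + t *\<^sub>R v"
  shows "Fix (\<lambda>y. T (y + v)) = Fix (\<lambda>y. v + T y)"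
  using assms[of _ 1] by (simp add: Fix_def add.commute)

lemma mem_lineality_space_iff:
  "d \<in> lineality_space C \<longleftrightarrow> (\<forall>c\<in>C. \<forall>t. c + t *\<^sub>R d \<in> C)"
proof
  assume "d \<in> lineality_space C"
  then show "\<forall>c\<in>C. \<forall>t. c + t *\<^sub>R d \<in> C"
    unfolding lineality_space_def by blast
next
  assume "\<forall>c\<in>C. \<forall>t. c + t *\<^sub>R d \<in> C"
  moreover have "c \<in> {c + t *\<^sub>R d | c t. c \<in> C}" if "c \<in> C" for c
    using that by (intro CollectI exI[of _ c] exI[of _ 0]) simp
  ultimately show "d \<in> lineality_space C"
    unfolding lineality_space_def by blast
qed

lemma lineality_space_sums_eq:
  assumes "d \<in> lineality_space C"
  shows "{t *\<^sub>R d + c | t c. c \<in> C} = C"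
proof
  show "{t *\<^sub>R d + c | t c. c \<in> C} \<subseteq> C"
    using assms unfolding mem_lineality_space_iff by (auto simp: add.commute)
  show "C \<subseteq> {t *\<^sub>R d + c | t c. c \<in> C}"
  proof
    fix c assume "c \<in> C"
    moreover have "c = 0 *\<^sub>R d + c" by simp
    ultimately show "c \<in> {t *\<^sub>R d + c | t c. c \<in> C}" by blast
  qed
qed

lemma lineality_space_translation_eq:
  assumes "d \<in> lineality_space C"
  shows "(\<lambda>c. - d + c) ` C = C"
proof
  show "(\<lambda>c. - d + c) ` C \<subseteq> C"
  proof (rule image_subsetI)
    fix c assume "c \<in> C"
    then have "c + (- 1) *\<^sub>R d \<in> C"
      using assms[unfolded mem_lineality_space_iff] by blast
    then show "- d + c \<in> C" by simp
  qed
  show "C \<subseteq> (\<lambda>c. - d + c) ` C"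
  proof
    fix c assume "c \<in> C"
    then have "c + 1 *\<^sub>R d \<in> C"
      using assms[unfolded mem_lineality_space_iff] by blast
    then show "c \<in> (\<lambda>c. - d + c) ` C"
      by (rule rev_image_eqI) simp
  qed
qed

lemma lineality_space_Fix_shifted_value:
  fixes T :: "'a::real_vector \<Rightarrow> 'a"
  assumes "\<And>y t. T (y + t *\<^sub>R v) = T y + t *\<^sub>R v"
  shows "v \<in> lineality_space (Fix (\<lambda>y. v + T y))"
  unfolding mem_lineality_space_iff using assms by (simp add: Fix_def algebra_simps)

lemma
  fixes L :: "'a::{real_inner,complete_space} \<Rightarrow> 'a"
  assumes lin: "linear L" and nonexp: "\<And>y. norm (L y) \<le> norm y"
    and v: "v = proj (closure (range (\<lambda>y. y - (L y + b)))) 0"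
  shows proj_closure_range_diff_eq: "proj (closure (range (\<lambda>y. y - L y))) b = b + v"
    and minimal_displacement_fixed: "v \<in> Fix L"
    and minimal_displacement_eq_proj_Fix: "v = proj (Fix L) (- b)"
proof -
  define S where "S = closure (range (\<lambda>y. y - L y))"
  have S: "subspace S" "closed S"
    unfolding S_def using subspace_closure[OF subspace_range_diff[OF lin]] by auto
  have S_orth: "orthogonal_comp S = Fix L"
    unfolding S_def orthogonal_comp_closure Fix_eq_orthogonal_comp_range_diff[OF lin nonexp] ..
  have Fix_subspace: "subspace (Fix L)"
    unfolding S_orth[symmetric] by (rule subspace_orthogonal_comp)
  have "range (\<lambda>y. y - (L y + b)) = (\<lambda>s. s - b) ` range (\<lambda>y. y - L y)"
    by (simp add: image_image diff_diff_eq)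
  then have "closure (range (\<lambda>y. y - (L y + b))) = (\<lambda>s. s - b) ` S"
    unfolding S_def by (simp add: closure_translation_subtract)
  then have "v = proj S b - b"
    using v proj_translation_subtract[of S b 0] S subspace_imp_convex subspace_0 by auto
  then show proj_S: "proj (closure (range (\<lambda>y. y - L y))) b = b + v"
    unfolding S_def by simp
  have "b - proj S b \<in> Fix L"
    using proj_subspace_orthogonal[OF S, of b] unfolding S_orth .
  then have "- v \<in> Fix L"
    using proj_S by (simp add: S_def)
  then show v_Fix: "v \<in> Fix L"
    using subspace_neg[OF Fix_subspace] by fastforce
  have "proj S b \<in> orthogonal_comp (Fix L)"
    using proj_in[of S b] S subspace_imp_convex subspace_0 orthogonal_comp_subset[of S]
    unfolding S_orth by blast
  then have "- b - v \<in> orthogonal_comp (Fix L)"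
    using subspace_neg[OF subspace_orthogonal_comp] proj_S unfolding S_def by fastforce
  then show "v = proj (Fix L) (- b)"
    using Fix_subspace closed_orthogonal_comp v_Fix unfolding S_orth[symmetric]
    by (intro proj_subspace_eqI[symmetric]) auto
qed

lemma minimal_displacement_eq_0_iff:
  fixes L :: "'a::{real_inner,complete_space} \<Rightarrow> 'a"
  assumes lin: "linear L" and nonexp: "\<And>y. norm (L y) \<le> norm y"
    and v: "v = proj (closure (range (\<lambda>y. y - (L y + b)))) 0"
    and v_range: "v \<in> range (\<lambda>y. y - (L y + b))"
  shows "v = 0 \<longleftrightarrow> b \<in> range (\<lambda>y. y - L y)"
proof
  assume "v = 0"
  from v_range obtain y where "v = y - (L y + b)" by blast
  with \<open>v = 0\<close> have "b = y - L y" by (simp add: algebra_simps)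
  then show "b \<in> range (\<lambda>y. y - L y)" by blast
next
  define S where "S = closure (range (\<lambda>y. y - L y))"
  assume "b \<in> range (\<lambda>y. y - L y)"
  then have "b \<in> S"
    unfolding S_def by (rule closure_subset[THEN subsetD])
  moreover have "subspace S" "closed S"
    unfolding S_def using subspace_closure[OF subspace_range_diff[OF lin]] by auto
  moreover have "b - b \<in> orthogonal_comp S"
    by (simp add: subspace_0[OF subspace_orthogonal_comp])
  ultimately have "proj S b = b"
    by (intro proj_subspace_eqI)
  then show "v = 0"
    using proj_closure_range_diff_eq[OF lin nonexp v] unfolding S_def by simp
qed

theorem theorem3p2:
  fixes L :: "'a::{real_inner, complete_space} \<Rightarrow> 'a" and b x :: 'a
    and T :: "'a \<Rightarrow> 'a" and v :: 'a
  assumes lin: "linear L"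
    and nonexp: "\<forall>y z. norm (L y - L z) \<le> norm (y - z)"
    and T_def: "T = (\<lambda>y. L y + b)"
    and v_def: "v = proj (closure (range (\<lambda>y. y - T y))) 0"
    and v_ran: "v \<in> range (\<lambda>y. y - T y)"
  shows
    "(v = proj (Fix L) (- b) \<and> v \<in> Fix L
        \<and> Fix L = orthogonal_comp (range (\<lambda>y. y - L y))
        \<and> (v \<noteq> 0 \<longleftrightarrow> b \<notin> range (\<lambda>y. y - L y)))
     \<and> (\<forall>n. (T ^^ n) x = (L ^^ n) x + (\<Sum>k<n. (L ^^ k) b))
     \<and> (\<forall>n. (T ^^ n) x + real n *\<^sub>R v
            = (L ^^ n) x + (\<Sum>k<n. (L ^^ k) (proj (closure (range (\<lambda>y. y - L y))) b)))
     \<and> (\<forall>n. ((\<lambda>y. T (y + v)) ^^ n) x = (T ^^ n) x + real n *\<^sub>R v)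
     \<and> (\<forall>n. ((\<lambda>y. T (y + v)) ^^ n) x = ((\<lambda>y. v + T y) ^^ n) x)
     \<and> (Fix (\<lambda>y. T (y + v)) = (\<lambda>y. - v + y) ` Fix (\<lambda>y. T (y + v))
        \<and> (\<lambda>y. - v + y) ` Fix (\<lambda>y. T (y + v)) = (\<lambda>y. - v + y) ` Fix (\<lambda>y. v + T y)
        \<and> (\<lambda>y. - v + y) ` Fix (\<lambda>y. v + T y) = Fix (\<lambda>y. v + T y))
     \<and> (Fix (\<lambda>y. T (y + v)) = Fix (\<lambda>y. v + T y)
        \<and> Fix (\<lambda>y. v + T y) = {t *\<^sub>R v + y | t y. y \<in> Fix (\<lambda>y. v + T y)}
        \<and> {t *\<^sub>R v + y | t y. y \<in> Fix (\<lambda>y. v + T y)} = {t *\<^sub>R v + y | t y. y \<in> Fix (\<lambda>y. T (y + v))}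
        \<and> affine (Fix (\<lambda>y. T (y + v)))
        \<and> v \<in> lineality_space (Fix (\<lambda>y. T (y + v))))"
proof -
  have nonexp': "norm (L y) \<le> norm y" for y
    using nonexp[rule_format, of y 0] by (simp add: linear_0[OF lin])
  have v: "v = proj (closure (range (\<lambda>y. y - (L y + b)))) 0"
    using v_def unfolding T_def .
  note v_Fix = minimal_displacement_fixed[OF lin nonexp' v]
  then have Lv: "L v = v" by (simp add: Fix_def)
  then have shift: "T (y + t *\<^sub>R v) = T y + t *\<^sub>R v" for y t
    unfolding T_def by (simp add: linear_add[OF lin] linear_scale[OF lin])
  have orbit_T: "(T ^^ n) x = (L ^^ n) x + (\<Sum>k<n. (L ^^ k) b)" for n
    unfolding T_def by (rule funpow_affine[OF lin])
  then have orbit_shifted: "(T ^^ n) x + real n *\<^sub>R v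
      = (L ^^ n) x + (\<Sum>k<n. (L ^^ k) (proj (closure (range (\<lambda>y. y - L y))) b))" for n
    by (simp add: proj_closure_range_diff_eq[OF lin nonexp' v] sum_funpow_add_fixed[OF lin Lv])
  define F where "F = Fix (\<lambda>y. v + T y)"
  have F_lineality: "v \<in> lineality_space F"
    unfolding F_def using shift by (rule lineality_space_Fix_shifted_value)
  have "(\<lambda>y. v + T y) = (\<lambda>y. L y + (b + v))"
    unfolding T_def by (simp add: algebra_simps)
  then have "affine F"
    unfolding F_def using affine_Fix_affine_map[OF lin] by simp
  then show ?thesis
    using minimal_displacement_eq_proj_Fix[OF lin nonexp' v] v_Fix
      Fix_eq_orthogonal_comp_range_diff[OF lin nonexp']
      minimal_displacement_eq_0_iff[OF lin nonexp' v v_ran[unfolded T_def]]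
      orbit_T orbit_shifted funpow_shifted_arg[OF shift] funpow_shifted_value[OF shift]
      Fix_shifted_arg_eq_Fix_shifted_value[OF shift, folded F_def] F_lineality
      lineality_space_translation_eq[OF F_lineality] lineality_space_sums_eq[OF F_lineality]
    unfolding F_def[symmetric] by simp
qed

end
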